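(* Let $n\ge1$ and let $f$ be a positive integral frieze on the orbifold $P_n^\star$, where $\star$ is an orbifold point of order $3$. Then there exists a unique triangulation $T$ of $P_n^\star$ such that $f(\tau)=1$ for all $\tau\in T$.
   Context: Let $p\ge2$ and $\lambda_p=2\cos(\pi/p)$. $P_n^\star$ is a polygon with boundary vertices $v_0,\ldots,v_{n-1}$ (clockwise, indices mod $n$) and one interior orbifold point $\star$ of order $p$; it is the quotient of the polygon $P_{pn}$ by rotation through $2\pi/p$. Arcs on $P_n^\star$ are the images of rotation-invariant orbits of diagonals (and boundary edges) of $P_{pn}$ that are pairwise non-crossing within the orbit; concretely they are: standard arcs $(v_i,v_j)$, $i\ne j$, the curve from $v_i$ to $v_j$ such that $v_{i+1},\ldots,v_{j-1}$ lie on the side not containing $\star$ (for $j=i+1$ this is a boundary segment), and pending arcs $(v_i,v_i)$, a loop at $v_i$ cutting out a monogon containing $\star$ (image of the orbit of the diameter-type diagonals $(u_i,u_{i+n})$ of $P_{pn}$). A triangulation of $P_n^\star$ is the image of a maximal rotation-invariant set of non-crossing diagonals of $P_{pn}$, equivalently a maximal set of pairwise non-crossing arcs. A frieze on $P_n^\star$ with values in an integral domain $R$ is a function $f$ from arcs to $R$ with $f(\gamma)=1$ for every boundary segment $\gamma$ and respecting skein relations: whenever arcs $\tau,\tau'$ cross at a point, $f(\tau)f(\tau')=f(\Gamma^+)+f(\Gamma^-)$ where $\Gamma^\pm$ are the two multicurves obtained by smoothing that crossing in the two possible ways, $f$ of a multicurve is the product over its components, self-crossings produced are smoothed recursively in the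 same way, a contractible closed curve has value $-2$, and a closed curve enclosing $\star$ has value $\lambda_p$. In particular for two distinct pending arcs, $f(v_i,v_i)f(v_j,v_j)=f(v_i,v_j)^2+\lambda_pf(v_i,v_j)f(v_j,v_i)+f(v_j,v_i)^2$. The frieze is positive integral if all values lie in $\mathbb{Z}_{>0}$. *)

theory Defs
  imports Complex_Main
begin

definition lambda_p :: "nat \<Rightarrow> real" where
  "lambda_p p = 2 * cos (pi / real p)"

text \<open>Arcs of P_n^star are encoded as pairs (i,d) with i < n and 1 \<le> d \<le> n:
  the arc from v_i to v_((i+d) mod n) such that v_(i+1),...,v_(i+d-1) lie on the side
  not containing star.  d = 1 is the boundary segment (v_i,v_(i+1)); d = n is the
  pending arc (v_i,v_i); 1 < d < n are the other standard arcs.  In the lift to the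
  universal cover of the (punctured) disk, i.e. a strip with vertices at the integers
  and deck translation by n, the arc (i,d) lifts to the intervals [a, a+d] with
  a = i mod n.\<close>
definition orb_arcs :: "nat \<Rightarrow> (nat \<times> nat) set" where
  "orb_arcs n = {(i, d). i < n \<and> 1 \<le> d \<and> d \<le> n}"

definition is_boundary_seg :: "nat \<times> nat \<Rightarrow> bool" where
  "is_boundary_seg \<tau> \<longleftrightarrow> snd \<tau> = 1"

definition lift_arc :: "nat \<Rightarrow> int \<Rightarrow> nat \<Rightarrow> nat \<times> nat" where
  "lift_arc n a L = (nat (a mod int n), L)"

text \<open>Value of the (possibly self-crossing) curve whose lift is the interval [a,b],
  0 < b - a < 2n.  For n < b - a = n + m < 2n the curve
  has exactly one self-crossing; smoothing it gives (closed curve around star) times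
  the arc [a, a+m], plus the arc [a+m-n, a] (= arc [a+m, a+n]).\<close>
definition curve_val :: "nat \<Rightarrow> real \<Rightarrow> (nat \<times> nat \<Rightarrow> real) \<Rightarrow> int \<Rightarrow> int \<Rightarrow> real" where
  "curve_val n lam f a b =
     (if b - a \<le> int n then f (lift_arc n a (nat (b - a)))
      else lam * f (lift_arc n a (nat (b - a - int n)))
           + f (lift_arc n (b - int n) (nat (2 * int n - (b - a)))))"

definition crosses :: "nat \<Rightarrow> nat \<times> nat \<Rightarrow> nat \<times> nat \<Rightarrow> bool" where
  "crosses n \<tau> \<sigma> \<longleftrightarrow> (\<exists>t::int.
     let a = int (fst \<tau>); b = a + int (snd \<tau>);
         c = int (fst \<sigma>) + t * int n; d = c + int (snd \<sigma>)
     in (a < c \<and> c < b \<and> b < d) \<or> (c < a \<and> a < d \<and> d < b))"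

text \<open>Frieze on P_n^star (orbifold point of order p), real valued: boundary segments
  have value 1, and for every crossing point of two arcs (i.e. every strictly
  interleaving pair of lifts a < c < a+L1 < c+L2) the skein relation holds:
  the two smoothings give [a,c] u [a+L1, c+L2] and [a, c+L2] u [c, a+L1].\<close>
definition is_frieze :: "nat \<Rightarrow> nat \<Rightarrow> (nat \<times> nat \<Rightarrow> real) \<Rightarrow> bool" where
  "is_frieze p n f \<longleftrightarrow>
     (\<forall>i<n. f (i, 1) = 1) \<and>
     (\<forall>(a::int) (c::int) (L1::nat) (L2::nat).
        1 \<le> L1 \<longrightarrow> L1 \<le> n \<longrightarrow> 1 \<le> L2 \<longrightarrow> L2 \<le> n \<longrightarrow>
        a < c \<longrightarrow> c < a + int L1 \<longrightarrow> a + int L1 < c + int L2 \<longrightarrow>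
        f (lift_arc n a L1) * f (lift_arc n c L2) =
          curve_val n (lambda_p p) f a c * curve_val n (lambda_p p) f (a + int L1) (c + int L2)
        + curve_val n (lambda_p p) f a (c + int L2) * curve_val n (lambda_p p) f c (a + int L1))"

definition positive_integral_frieze :: "nat \<Rightarrow> nat \<Rightarrow> (nat \<times> nat \<Rightarrow> real) \<Rightarrow> bool" where
  "positive_integral_frieze p n f \<longleftrightarrow>
     is_frieze p n f \<and> (\<forall>\<tau>\<in>orb_arcs n. f \<tau> \<in> \<int> \<and> f \<tau> > 0)"

text \<open>Triangulation: maximal set of pairwise non-crossing arcs that are not boundary
  segments (images of rotation-invariant diagonal sets of P_pn).\<close>
definition is_triangulation :: "nat \<Rightarrow> (nat \<times> nat) set \<Rightarrow> bool" where
  "is_triangulation n T \<longleftrightarrow>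
     T \<subseteq> {\<tau> \<in> orb_arcs n. \<not> is_boundary_seg \<tau>} \<and>
     (\<forall>\<tau>\<in>T. \<forall>\<sigma>\<in>T. \<not> crosses n \<tau> \<sigma>) \<and>
     (\<forall>\<sigma>\<in>orb_arcs n. \<not> is_boundary_seg \<sigma> \<longrightarrow> \<sigma> \<notin> T \<longrightarrow> (\<exists>\<tau>\<in>T. crosses n \<tau> \<sigma>))"

end

(* For crossing arcs the skein relation writes the product of their values as a sum of two
   products of curve values, each at least 1 because lambda_p >= 0; so two arcs of value 1 never
   cross, and a triangulation with all values 1 can only be the set of all arcs of value 1.

   That this set is a triangulation is proved for sub-polygons: if all sides of a sub-polygon S have
   value 1, every diagonal of S of value other than 1 is crossed by a diagonal of S of value 1.
   Induct on the number of vertices. Some ear u, v, w of S has f(u, w) = 1: otherwise the values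
   grow strictly along every fan, and the skein relation for the pending arc at a vertex forces
   lambda_p >= 2. Removing v leaves a smaller sub-polygon whose sides again have value 1, and the
   diagonals ending at v are crossed by the chord (u, w). *)

theory Submission
  imports Defs
begin

lemma lambda_p_nonneg:
  assumes "2 \<le> p" shows "0 \<le> lambda_p p"
proof -
  have "pi / real p \<le> pi / 2"
    using assms by (intro divide_left_mono) auto
  then have "0 \<le> cos (pi / real p)"
    by (intro cos_ge_zero) (auto intro: order.trans[of _ 0] simp: pi_ge_zero)
  then show ?thesis unfolding lambda_p_def by simp
qed

lemma lambda_p_less_2:
  assumes "2 \<le> p" shows "lambda_p p < 2"
proof -
  have "pi / real p \<le> pi"
    using assms by (simp add: divide_le_eq pi_ge_zero)
  then have "cos (pi / real p) < cos 0"
    using assms by (intro cos_monotone_0_pi) auto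
  then show ?thesis unfolding lambda_p_def by simp
qed

definition interleaved :: "int \<Rightarrow> int \<Rightarrow> int \<Rightarrow> int \<Rightarrow> bool" where
  "interleaved a b c d \<longleftrightarrow> (a < c \<and> c < b \<and> b < d) \<or> (c < a \<and> a < d \<and> d < b)"

lemma interleaved_commute: "interleaved a b c d \<longleftrightarrow> interleaved c d a b"
  unfolding interleaved_def by auto

lemma interleaved_eqI:
  "interleaved a b c d \<Longrightarrow> a' = a + s \<Longrightarrow> b' = b + s \<Longrightarrow> c' = c + s \<Longrightarrow> d' = d + s \<Longrightarrow>
   interleaved a' b' c' d'"
  unfolding interleaved_def by auto

lemma crosses_iff_interleaved:
  "crosses n \<tau> \<sigma> \<longleftrightarrow> (\<exists>t. interleaved (int (fst \<tau>)) (int (fst \<tau>) + int (snd \<tau>))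
      (int (fst \<sigma>) + t * int n) (int (fst \<sigma>) + t * int n + int (snd \<sigma>)))"
  unfolding crosses_def interleaved_def Let_def by simp

lemma mod_eq_imp_shift:
  fixes a b m :: int
  assumes "a mod m = b mod m" shows "\<exists>k. a = b + k * m"
proof
  show "a = b + (a div m - b div m) * m"
    using div_mult_mod_eq[of a m] div_mult_mod_eq[of b m] assms unfolding left_diff_distrib
    by linarith
qed

lemma mod_neq_within_period:
  fixes a b m :: int
  assumes "a < b" "b < a + m" shows "a mod m \<noteq> b mod m"
proof
  assume "a mod m = b mod m"
  then have "(b - a) mod m = 0" by (simp add: mod_diff_eq[symmetric])
  moreover have "(b - a) mod m = b - a" using assms by simp
  ultimately show False using assms by simp
qed

locale pos_int_frieze =
  fixes p n :: nat and f :: "nat \<times> nat \<Rightarrow> real"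
  assumes two_le_p: "2 \<le> p" and n_pos: "1 \<le> n" and pos_int: "positive_integral_frieze p n f"
begin

definition F :: "int \<Rightarrow> int \<Rightarrow> real" where
  "F x y = f (lift_arc n x (nat (y - x)))"

abbreviation curve :: "int \<Rightarrow> int \<Rightarrow> real" where
  "curve \<equiv> curve_val n (lambda_p p) f"

lemma F_shift: "F (x + k * int n) (y + k * int n) = F x y"
  unfolding F_def lift_arc_def by simp

lemma F_arc: "\<tau> \<in> orb_arcs n \<Longrightarrow> F (int (fst \<tau>)) (int (fst \<tau>) + int (snd \<tau>)) = f \<tau>"
  unfolding F_def lift_arc_def orb_arcs_def by (cases \<tau>) auto

lemma residue_less: "nat (x mod int n) < n"
  using n_pos by (simp add: nat_less_iff)

lemma lift_arc_in_orb_arcs: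
  assumes "x < y" "y \<le> x + int n" shows "lift_arc n x (nat (y - x)) \<in> orb_arcs n"
  using assms residue_less unfolding lift_arc_def orb_arcs_def by auto

lemma F_int_pos:
  assumes "x < y" "y \<le> x + int n"
  shows "F x y \<in> \<int>" "1 \<le> F x y"
proof -
  have "F x y \<in> \<int>" "0 < F x y"
    using pos_int lift_arc_in_orb_arcs[OF assms] unfolding positive_integral_frieze_def F_def by auto
  then show "F x y \<in> \<int>" "1 \<le> F x y" by (auto elim!: Ints_cases)
qed

lemma F_ge_2:
  assumes "x < y" "y \<le> x + int n" "F x y \<noteq> 1" shows "2 \<le> F x y"
  using F_int_pos[OF assms(1,2)] assms(3) by (auto elim!: Ints_cases)

lemma F_boundary: "F x (x + 1) = 1"
  using pos_int residue_less unfolding positive_integral_frieze_def is_frieze_def F_def lift_arc_def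
  by auto

lemma curve_short: "y \<le> x + int n \<Longrightarrow> curve x y = F x y"
  unfolding curve_val_def F_def by simp

lemma curve_long:
  assumes "int n < y - x"
  shows "curve x y = lambda_p p * F x (y - int n) + F (y - int n) (x + int n)"
proof -
  have "nat (y - x - int n) = nat (y - int n - x)"
    and "nat (2 * int n - (y - x)) = nat (x + int n - (y - int n))"
    by (simp_all add: algebra_simps)
  then show ?thesis using assms unfolding curve_val_def F_def by simp
qed

lemma curve_ge_1:
  assumes "x < y" "y - x < 2 * int n" shows "1 \<le> curve x y"
proof (cases "y - x \<le> int n")
  case True
  then show ?thesis using F_int_pos(2)[of x y] assms curve_short by simp
next
  case False
  then have "1 \<le> F (y - int n) (x + int n)" "0 \<le> lambda_p p * F x (y - int n)"
    using F_int_pos[of "y - int n" "x + int n"] F_int_pos[of x "y - int n"] assms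
      lambda_p_nonneg[OF two_le_p] by auto
  then show ?thesis using False curve_long by simp
qed

lemma skein:
  assumes "a < c" "c < b" "b < d" "b \<le> a + int n" "d \<le> c + int n"
  shows "F a b * F c d = curve a c * curve b d + curve a d * curve c b"
proof -
  define L1 where "L1 = nat (b - a)"
  define L2 where "L2 = nat (d - c)"
  have L: "1 \<le> L1" "L1 \<le> n" "1 \<le> L2" "L2 \<le> n" "a + int L1 = b" "c + int L2 = d"
    using assms unfolding L1_def L2_def by auto
  have "is_frieze p n f" using pos_int unfolding positive_integral_frieze_def by simp
  then have "f (lift_arc n a L1) * f (lift_arc n c L2) =
      curve a c * curve (a + int L1) (c + int L2) + curve a (c + int L2) * curve c (a + int L1)"
    using L assms unfolding is_frieze_def by blast
  then show ?thesis unfolding F_def L1_def L2_def using L by (simp add: L1_def L2_def)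
qed

lemma interleaved_F_product_ge_2:
  assumes "interleaved a b c d" "b \<le> a + int n" "d \<le> c + int n"
  shows "2 \<le> F a b * F c d"
proof -
  have ge_2: "2 \<le> F a b * F c d"
    if "a < c" "c < b" "b < d" "b \<le> a + int n" "d \<le> c + int n" for a b c d
  proof -
    have "1 \<le> curve a c * curve b d" "1 \<le> curve a d * curve c b"
      using that by (auto intro!: mult_ge1_I curve_ge_1)
    then show ?thesis using skein[OF that] by linarith
  qed
  from assms show ?thesis
    unfolding interleaved_def using ge_2[of a c b d] ge_2[of c a d b] by (auto simp: mult.commute)
qed

lemma crossing_arcs_product_ge_2:
  assumes "\<tau> \<in> orb_arcs n" "\<sigma> \<in> orb_arcs n" "crosses n \<tau> \<sigma>"
  shows "2 \<le> f \<tau> * f \<sigma>"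
proof -
  obtain t where t: "interleaved (int (fst \<tau>)) (int (fst \<tau>) + int (snd \<tau>))
      (int (fst \<sigma>) + t * int n) (int (fst \<sigma>) + t * int n + int (snd \<sigma>))"
    using assms(3) crosses_iff_interleaved by blast
  have "f \<sigma> = F (int (fst \<sigma>) + t * int n) (int (fst \<sigma>) + t * int n + int (snd \<sigma>))"
    using F_arc[OF assms(2)] F_shift[of "int (fst \<sigma>)" t "int (fst \<sigma>) + int (snd \<sigma>)"]
    by (simp add: algebra_simps)
  moreover have "snd \<tau> \<le> n" "snd \<sigma> \<le> n" using assms(1,2) unfolding orb_arcs_def by auto
  ultimately show ?thesis using interleaved_F_product_ge_2[OF t] F_arc[OF assms(1)] by simp
qed

text \<open>A set S of residues stands for the sub-polygon of P_n^star with vertices v_s, s \<in> S; in the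
  lift its vertices are the integers z with marked S z.\<close>
definition marked :: "nat set \<Rightarrow> int \<Rightarrow> bool" where
  "marked S z \<longleftrightarrow> nat (z mod int n) \<in> S"

definition adjacent :: "nat set \<Rightarrow> int \<Rightarrow> int \<Rightarrow> bool" where
  "adjacent S x y \<longleftrightarrow> x < y \<and> marked S x \<and> marked S y \<and> (\<forall>z. x < z \<and> z < y \<longrightarrow> \<not> marked S z)"

definition diagonal :: "nat set \<Rightarrow> int \<Rightarrow> int \<Rightarrow> bool" where
  "diagonal S a b \<longleftrightarrow> marked S a \<and> marked S b \<and> a < b \<and> b \<le> a + int n \<and> \<not> adjacent S a b"

definition unit_edges :: "nat set \<Rightarrow> bool" where
  "unit_edges S \<longleftrightarrow> (\<forall>x y. adjacent S x y \<longrightarrow> F x y = 1)"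

lemma marked_shift [simp]:
  "marked S (z + k * int n) = marked S z" "marked S (z + int n) = marked S z"
  unfolding marked_def by simp_all

lemma adjacent_shift: "adjacent S (x + k * int n) (y + k * int n) = adjacent S x y"
proof -
  have "(\<forall>z. x + k * int n < z \<and> z < y + k * int n \<longrightarrow> \<not> marked S z) \<longleftrightarrow>
        (\<forall>z. x < z \<and> z < y \<longrightarrow> \<not> marked S z)"
  proof
    assume "\<forall>z. x + k * int n < z \<and> z < y + k * int n \<longrightarrow> \<not> marked S z"
    then show "\<forall>z. x < z \<and> z < y \<longrightarrow> \<not> marked S z"
      by (metis add_less_cancel_right marked_shift(1))
  next
    assume "\<forall>z. x < z \<and> z < y \<longrightarrow> \<not> marked S z"
    then show "\<forall>z. x + k * int n < z \<and> z < y + k * int n \<longrightarrow> \<not> marked S z"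
      by (metis add_less_cancel_right diff_add_cancel marked_shift(1))
  qed
  then show ?thesis unfolding adjacent_def by simp
qed

lemma diagonal_shift: "diagonal S (a + k * int n) (b + k * int n) = diagonal S a b"
  unfolding diagonal_def using adjacent_shift by simp

lemma adjacent_upper_le: "adjacent S x q \<Longrightarrow> marked S z \<Longrightarrow> x < z \<Longrightarrow> q \<le> z"
  unfolding adjacent_def by force

lemma adjacent_lower_ge: "adjacent S t y \<Longrightarrow> marked S z \<Longrightarrow> z < y \<Longrightarrow> z \<le> t"
  unfolding adjacent_def by force

lemma adjacent_subset:
  "T \<subseteq> S \<Longrightarrow> adjacent S x y \<Longrightarrow> marked T x \<Longrightarrow> marked T y \<Longrightarrow> adjacent T x y"
  unfolding adjacent_def marked_def by auto

lemma marked_successor: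
  assumes "marked S x" shows "\<exists>q. adjacent S x q"
proof -
  let ?A = "{z. x < z \<and> z \<le> x + int n \<and> marked S z}"
  define q where "q = Min ?A"
  have "finite ?A" by (rule finite_subset[of _ "{x<..x + int n}"]) auto
  moreover have "x + int n \<in> ?A" using assms n_pos by simp
  ultimately have "q \<in> ?A" "\<And>z. z \<in> ?A \<Longrightarrow> q \<le> z"
    unfolding q_def using Min_in[of ?A] by (blast, simp)
  moreover have "\<not> marked S z" if "x < z" "z < q" for z
  proof
    assume "marked S z"
    then have "z \<in> ?A" using that \<open>q \<in> ?A\<close> by simp
    then show False using \<open>\<And>z. z \<in> ?A \<Longrightarrow> q \<le> z\<close> that by fastforce
  qed
  ultimately have "adjacent S x q" unfolding adjacent_def using assms by blast
  then show ?thesis ..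
qed

lemma marked_predecessor:
  assumes "marked S y" shows "\<exists>t. adjacent S t y"
proof -
  let ?A = "{z. y - int n \<le> z \<and> z < y \<and> marked S z}"
  define t where "t = Max ?A"
  have "finite ?A" by (rule finite_subset[of _ "{y - int n..<y}"]) auto
  moreover have "y - int n \<in> ?A" using assms n_pos marked_shift(1)[of S "y - int n" 1] by simp
  ultimately have "t \<in> ?A" "\<And>z. z \<in> ?A \<Longrightarrow> z \<le> t"
    unfolding t_def using Max_in[of ?A] by (blast, simp)
  moreover have "\<not> marked S z" if "t < z" "z < y" for z
  proof
    assume "marked S z"
    then have "z \<in> ?A" using that \<open>t \<in> ?A\<close> by simp
    then show False using \<open>\<And>z. z \<in> ?A \<Longrightarrow> z \<le> t\<close> that by fastforce
  qed
  ultimately have "adjacent S t y" unfolding adjacent_def using assms by blast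
  then show ?thesis ..
qed

lemma marked_within_period:
  assumes "S \<subseteq> {..<n}" "2 \<le> card S" shows "\<exists>z. marked S z \<and> x < z \<and> z < x + int n"
proof -
  obtain s where s: "s \<in> S" "s \<noteq> nat (x mod int n)"
  proof -
    have "\<not> S \<subseteq> {nat (x mod int n)}"
      using assms(2) card_mono[of "{nat (x mod int n)}" S] by fastforce
    then show ?thesis using that by blast
  qed
  have "s < n" using s assms(1) by auto
  then have "int s mod int n = int s" by simp
  moreover have "x mod int n \<ge> 0" using n_pos by simp
  ultimately have "(int s - x) mod int n \<noteq> 0" using s(2) by (auto simp: mod_eq_dvd_iff[symmetric])
  moreover have "(int s - x) mod int n < int n" "(int s - x) mod int n \<ge> 0" using n_pos by auto
  moreover have "(x + (int s - x) mod int n) mod int n = int s"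
    using \<open>int s mod int n = int s\<close> by (simp add: mod_add_right_eq)
  ultimately show ?thesis using s(1) unfolding marked_def
    by (intro exI[of _ "x + (int s - x) mod int n"]) auto
qed

lemma adjacent_length_less:
  assumes "S \<subseteq> {..<n}" "2 \<le> card S" "adjacent S x y" shows "y < x + int n"
  using marked_within_period[OF assms(1,2), of x] adjacent_upper_le[OF assms(3)] by force

lemma adjacent_mod_neq:
  assumes "S \<subseteq> {..<n}" "2 \<le> card S" "adjacent S x y" shows "x mod int n \<noteq> y mod int n"
  using adjacent_length_less[OF assms] assms(3) mod_neq_within_period unfolding adjacent_def by blast

lemma ear_diagonal:
  assumes "S \<subseteq> {..<n}" "2 \<le> card S" "adjacent S u v" "adjacent S v w"
  shows "diagonal S u w"
proof -
  have "u < v" "v < w" "marked S u" "marked S v" "marked S w"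
    using assms(3,4) unfolding adjacent_def by auto
  moreover have "v < u + int n" using adjacent_length_less[OF assms(1-3)] .
  then have "w \<le> u + int n" using adjacent_upper_le[OF assms(4)] \<open>marked S u\<close> by simp
  moreover have "\<not> adjacent S u w" using adjacent_upper_le[of S u w v] calculation by auto
  ultimately show ?thesis unfolding diagonal_def by simp
qed

context
  fixes S
  assumes edges: "unit_edges S"
    and no_unit_ear: "\<And>u v w. adjacent S u v \<Longrightarrow> adjacent S v w \<Longrightarrow> 2 \<le> F u w"
begin

lemma F_extend_right:
  "marked S x \<Longrightarrow> adjacent S u y \<Longrightarrow> x < u \<Longrightarrow> y \<le> x + int n \<Longrightarrow> F x u + 1 \<le> F x y"
proof (induction "nat (u - x)" arbitrary: u y rule: less_induct)
  case less
  obtain t where t: "adjacent S t u"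
    using marked_predecessor less.prems(2) unfolding adjacent_def by blast
  have "x \<le> t" "t < u" "u < y"
    using adjacent_lower_ge[OF t less.prems(1,3)] t less.prems(2) unfolding adjacent_def by auto
  have ear: "2 \<le> F t y" using no_unit_ear t less.prems(2) .
  have edge_t: "F t u = 1" and edge_u: "F u y = 1"
    using edges t less.prems(2) unfolding unit_edges_def by auto
  show ?case
  proof (cases "t = x")
    case True
    then show ?thesis using ear edge_t by simp
  next
    case False
    then have "x < t" using \<open>x \<le> t\<close> by simp
    have "nat (t - x) < nat (u - x)" "u \<le> x + int n"
      using \<open>x < t\<close> \<open>t < u\<close> \<open>u < y\<close> less.prems(4) by auto
    with less.hyps have IH: "F x t + 1 \<le> F x u" using less.prems(1) t \<open>x < t\<close> by blast
    have "F x u * F t y = curve x t * curve u y + curve x y * curve t u"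
      using \<open>x < t\<close> \<open>t < u\<close> \<open>u < y\<close> less.prems(4) by (intro skein) auto
    then have "F x u * F t y = F x t + F x y"
      using \<open>x < t\<close> \<open>t < u\<close> \<open>u < y\<close> less.prems(4) edge_t edge_u by (simp add: curve_short)
    moreover have "2 * F x u \<le> F x u * F t y"
      using ear F_int_pos[of x u] \<open>u < y\<close> less.prems by (simp add: mult_right_mono mult.commute)
    ultimately show ?thesis using IH by linarith
  qed
qed

lemma F_extend_left:
  "marked S z \<Longrightarrow> adjacent S y u \<Longrightarrow> u < z \<Longrightarrow> z - int n \<le> y \<Longrightarrow> F u z + 1 \<le> F y z"
proof (induction "nat (z - u)" arbitrary: y u rule: less_induct)
  case less
  obtain t where t: "adjacent S u t"
    using marked_successor less.prems(2) unfolding adjacent_def by blast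
  have "t \<le> z" "u < t" "y < u"
    using adjacent_upper_le[OF t less.prems(1,3)] t less.prems(2) unfolding adjacent_def by auto
  have ear: "2 \<le> F y t" using no_unit_ear less.prems(2) t .
  have edge_t: "F u t = 1" and edge_u: "F y u = 1"
    using edges t less.prems(2) unfolding unit_edges_def by auto
  show ?case
  proof (cases "t = z")
    case True
    then show ?thesis using ear edge_t by simp
  next
    case False
    then have "t < z" using \<open>t \<le> z\<close> by simp
    have "nat (z - t) < nat (z - u)" "z - int n \<le> u"
      using \<open>t < z\<close> \<open>u < t\<close> \<open>y < u\<close> less.prems(4) by auto
    with less.hyps have IH: "F t z + 1 \<le> F u z" using less.prems(1) t \<open>t < z\<close> by blast
    have "F y t * F u z = curve y u * curve t z + curve y z * curve u t"
      using \<open>t < z\<close> \<open>u < t\<close> \<open>y < u\<close> less.prems(4) by (intro skein) auto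
    then have "F y t * F u z = F t z + F y z"
      using \<open>t < z\<close> \<open>u < t\<close> \<open>y < u\<close> less.prems(4) edge_t edge_u by (simp add: curve_short)
    moreover have "2 * F u z \<le> F y t * F u z"
      using ear F_int_pos[of u z] \<open>y < u\<close> less.prems by (simp add: mult_right_mono)
    ultimately show ?thesis using IH by linarith
  qed
qed

end

lemma unit_ear_exists:
  assumes S: "S \<subseteq> {..<n}" "2 \<le> card S" and edges: "unit_edges S"
  shows "\<exists>u v w. adjacent S u v \<and> adjacent S v w \<and> F u w = 1"
proof (rule ccontr)
  assume no_ear: "\<not> ?thesis"
  have ears: "2 \<le> F a c" if "adjacent S a b" "adjacent S b c" for a b c
  proof (rule F_ge_2)
    show "a < c" "c \<le> a + int n" using ear_diagonal[OF S that] unfolding diagonal_def by auto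
    show "F a c \<noteq> 1" using no_ear that by blast
  qed
  obtain s where "s \<in> S" using S(2) by fastforce
  define x where "x = int s"
  have x: "marked S x" unfolding marked_def x_def using \<open>s \<in> S\<close> S(1) by auto
  obtain y where xy: "adjacent S x y" using marked_successor[OF x] by blast
  obtain w where wx: "adjacent S w (x + int n)" using marked_predecessor x by fastforce
  obtain z where "marked S z" "x < z" "z < x + int n" using marked_within_period[OF S] by blast
  then have "x < y" "y \<le> w" "w < x + int n"
    using adjacent_upper_le[OF xy] adjacent_lower_ge[OF wx] xy wx unfolding adjacent_def by force+
  have edge_x: "F x y = 1" and edge_w: "F w (x + int n) = 1"
    using edges xy wx unfolding unit_edges_def by auto
  have left: "F x w + 1 \<le> F x (x + int n)"
    using F_extend_right[OF edges ears x wx] \<open>x < y\<close> \<open>y \<le> w\<close> by simp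
  have right: "F y (x + int n) + 1 \<le> F x (x + int n)"
    using F_extend_left[OF edges ears _ xy] x \<open>y \<le> w\<close> \<open>w < x + int n\<close> by simp
  have "adjacent S (x + int n) (y + int n)" using adjacent_shift[of S x 1 y] xy by simp
  then have ear: "2 \<le> F w (y + int n)" using ears wx by blast
  txt \<open>The smoothing of [x, y + n] with its self-crossing contributes lambda_p.\<close>
  have "F x (x + int n) * F w (y + int n)
      = curve x w * curve (x + int n) (y + int n) + curve x (y + int n) * curve w (x + int n)"
    using \<open>x < y\<close> \<open>y \<le> w\<close> \<open>w < x + int n\<close> by (intro skein) auto
  also have "\<dots> = F x w + lambda_p p + F y (x + int n)"
    using \<open>x < y\<close> \<open>y \<le> w\<close> \<open>w < x + int n\<close> adjacent_length_less[OF S xy] edge_x edge_w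
      F_shift[of x 1 y] by (simp add: curve_short curve_long)
  finally have "F x (x + int n) * F w (y + int n) = F x w + lambda_p p + F y (x + int n)" .
  moreover have "2 * F x (x + int n) \<le> F x (x + int n) * F w (y + int n)"
    using ear F_int_pos[of x "x + int n"] n_pos by (simp add: mult_left_mono mult.commute)
  ultimately show False using left right lambda_p_less_2[OF two_le_p] by linarith
qed

lemma marked_remove:
  "marked (S - {nat (v mod int n)}) z \<longleftrightarrow> marked S z \<and> z mod int n \<noteq> v mod int n"
  using n_pos unfolding marked_def by (auto simp: eq_nat_nat_iff)

lemma adjacent_after_removal:
  assumes uv: "adjacent S u v" and vw: "adjacent S v w"
    and u: "u mod int n \<noteq> v mod int n" and w: "w mod int n \<noteq> v mod int n"
    and ab: "adjacent (S - {nat (v mod int n)}) a b" and not_ab: "\<not> adjacent S a b"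
  shows "\<exists>k. a = u + k * int n \<and> b = w + k * int n"
proof -
  have "a < b" "marked S a" "marked S b" using ab marked_remove unfolding adjacent_def by auto
  with not_ab obtain z where z: "a < z" "z < b" "marked S z" unfolding adjacent_def by auto
  then have "z mod int n = v mod int n" using ab marked_remove unfolding adjacent_def by blast
  then obtain k where k: "z = v + k * int n" using mod_eq_imp_shift by blast
  have uz: "adjacent S (u + k * int n) z" and zw: "adjacent S z (w + k * int n)"
    using uv vw adjacent_shift k by auto
  have u_removed: "marked (S - {nat (v mod int n)}) (u + k * int n)"
    and w_removed: "marked (S - {nat (v mod int n)}) (w + k * int n)"
    using uz zw u w marked_remove unfolding adjacent_def by auto
  have "a \<le> u + k * int n" "w + k * int n \<le> b"
    using adjacent_lower_ge[OF uz \<open>marked S a\<close> z(1)] adjacent_upper_le[OF zw \<open>marked S b\<close> z(2)] .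
  moreover have "\<not> a < u + k * int n"
  proof
    assume "a < u + k * int n"
    moreover have "u + k * int n < b" using uz z(2) unfolding adjacent_def by simp
    ultimately show False using ab u_removed unfolding adjacent_def by blast
  qed
  moreover have "\<not> w + k * int n < b"
  proof
    assume "w + k * int n < b"
    moreover have "a < w + k * int n" using zw z(1) unfolding adjacent_def by simp
    ultimately show False using ab w_removed unfolding adjacent_def by blast
  qed
  ultimately show ?thesis by auto
qed

lemma unit_edges_remove_ear:
  assumes S: "S \<subseteq> {..<n}" "2 \<le> card S" and edges: "unit_edges S"
    and uv: "adjacent S u v" and vw: "adjacent S v w" and ear: "F u w = 1"
  shows "unit_edges (S - {nat (v mod int n)})"
  unfolding unit_edges_def
proof (intro allI impI)
  fix x z assume xz: "adjacent (S - {nat (v mod int n)}) x z"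
  show "F x z = 1"
  proof (cases "adjacent S x z")
    case True
    then show ?thesis using edges unfolding unit_edges_def by blast
  next
    case False
    moreover have "u mod int n \<noteq> v mod int n" "w mod int n \<noteq> v mod int n"
      using adjacent_mod_neq[OF S uv] adjacent_mod_neq[OF S vw] by auto
    ultimately obtain k where "x = u + k * int n" "z = w + k * int n"
      using adjacent_after_removal[OF uv vw _ _ xz] by blast
    then show ?thesis using ear F_shift by simp
  qed
qed

lemma ear_crosses_diagonal:
  assumes uv: "adjacent S u v" and vw: "adjacent S v w" and ab: "diagonal S a b"
    and tip: "a mod int n = v mod int n \<or> b mod int n = v mod int n"
  shows "\<exists>k. interleaved a b (u + k * int n) (w + k * int n)"
  using tip
proof
  assume "a mod int n = v mod int n"
  then obtain k where k: "a = v + k * int n" using mod_eq_imp_shift by blast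
  then have "adjacent S a (w + k * int n)" using vw adjacent_shift by simp
  then have "w + k * int n \<le> b" "w + k * int n \<noteq> b"
    using adjacent_upper_le ab unfolding diagonal_def by auto
  then have "interleaved a b (u + k * int n) (w + k * int n)"
    using k uv vw unfolding interleaved_def adjacent_def by auto
  then show ?thesis ..
next
  assume "b mod int n = v mod int n"
  then obtain k where k: "b = v + k * int n" using mod_eq_imp_shift by blast
  then have "adjacent S (u + k * int n) b" using uv adjacent_shift by simp
  then have "a \<le> u + k * int n" "a \<noteq> u + k * int n"
    using adjacent_lower_ge ab unfolding diagonal_def by auto
  then have "interleaved a b (u + k * int n) (w + k * int n)"
    using k uv vw unfolding interleaved_def adjacent_def by auto
  then show ?thesis ..
qed

lemma no_diagonal_singleton: "\<not> diagonal {s} a b"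
proof
  assume ab: "diagonal {s} a b"
  have marked_s: "marked {s} z \<longleftrightarrow> z mod int n = a mod int n" for z
    using ab n_pos unfolding diagonal_def marked_def by (auto simp: eq_nat_nat_iff)
  then have "b = a + int n" using ab mod_neq_within_period[of a b "int n"] unfolding diagonal_def by force
  moreover have "\<not> marked {s} z" if "a < z" "z < a + int n" for z
    unfolding marked_s using mod_neq_within_period[OF that] by auto
  ultimately have "adjacent {s} a b" using ab unfolding diagonal_def adjacent_def by auto
  then show False using ab unfolding diagonal_def by simp
qed

lemma diagonal_crossed_by_unit_diagonal:
  assumes "S \<subseteq> {..<n}" "S \<noteq> {}" "unit_edges S" "diagonal S a b" "F a b \<noteq> 1"
  shows "\<exists>c d. diagonal S c d \<and> F c d = 1 \<and> interleaved a b c d"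
  using assms
proof (induction "card S" arbitrary: S a b rule: less_induct)
  case less
  have "finite S" using less.prems(1) finite_subset by blast
  then have "card S \<noteq> 0" using less.prems(2) by simp
  moreover have "card S \<noteq> 1" using less.prems(4) no_diagonal_singleton by (auto simp: card_1_singleton_iff)
  ultimately have card_S: "2 \<le> card S" by simp
  obtain u v w where uv: "adjacent S u v" and vw: "adjacent S v w" and ear: "F u w = 1"
    using unit_ear_exists[OF less.prems(1) card_S less.prems(3)] by blast
  show ?case
  proof (cases "a mod int n = v mod int n \<or> b mod int n = v mod int n")
    case True
    then obtain k where "interleaved a b (u + k * int n) (w + k * int n)"
      using ear_crosses_diagonal[OF uv vw less.prems(4)] by blast
    moreover have "diagonal S (u + k * int n) (w + k * int n)" "F (u + k * int n) (w + k * int n) = 1"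
      using ear_diagonal[OF less.prems(1) card_S uv vw] ear diagonal_shift F_shift by simp_all
    ultimately show ?thesis by blast
  next
    case False
    define S' where "S' = S - {nat (v mod int n)}"
    have "unit_edges S'"
      unfolding S'_def using unit_edges_remove_ear[OF less.prems(1) card_S less.prems(3) uv vw ear] .
    moreover from this have "diagonal S' a b"
      using False less.prems(4,5) marked_remove unfolding S'_def diagonal_def unit_edges_def by blast
    moreover have "card S' < card S"
      using \<open>finite S\<close> uv unfolding S'_def adjacent_def marked_def by (intro card_Diff1_less) auto
    moreover have "S' \<subseteq> {..<n}" "S' \<noteq> {}"
      using less.prems(1) \<open>diagonal S' a b\<close> unfolding S'_def diagonal_def marked_def by auto
    ultimately obtain c d where "diagonal S' c d" "F c d = 1" "interleaved a b c d"
      using less.hyps less.prems(5) by blast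
    moreover have "diagonal S c d"
      using \<open>diagonal S' c d\<close> adjacent_subset[of S' S c d] unfolding S'_def diagonal_def marked_def
      by auto
    ultimately show ?thesis by blast
  qed
qed

lemma marked_all: "marked {..<n} z"
  using residue_less unfolding marked_def by simp

lemma adjacent_all_iff: "adjacent {..<n} x y \<longleftrightarrow> y = x + 1"
proof
  assume "adjacent {..<n} x y"
  then have "x < y" "\<not> x + 1 < y" using marked_all[of "x + 1"] unfolding adjacent_def by auto
  then show "y = x + 1" by simp
next
  assume "y = x + 1"
  then show "adjacent {..<n} x y" unfolding adjacent_def using marked_all by auto
qed

definition unit_arcs :: "(nat \<times> nat) set" where
  "unit_arcs = {\<tau> \<in> orb_arcs n. \<not> is_boundary_seg \<tau> \<and> f \<tau> = 1}"

lemma crossed_by_unit_arc: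
  assumes "\<sigma> \<in> orb_arcs n" "\<not> is_boundary_seg \<sigma>" "f \<sigma> \<noteq> 1"
  shows "\<exists>\<tau>\<in>unit_arcs. crosses n \<tau> \<sigma>"
proof -
  define a where "a = int (fst \<sigma>)"
  define b where "b = a + int (snd \<sigma>)"
  have "diagonal {..<n} a b" "F a b \<noteq> 1"
    using assms F_arc marked_all adjacent_all_iff
    unfolding a_def b_def diagonal_def orb_arcs_def is_boundary_seg_def by auto
  moreover have "unit_edges {..<n}" unfolding unit_edges_def adjacent_all_iff using F_boundary by blast
  moreover have "0 \<in> {..<n}" using n_pos by simp
  ultimately obtain c d where cd: "diagonal {..<n} c d" "F c d = 1" "interleaved a b c d"
    using diagonal_crossed_by_unit_diagonal[of "{..<n}"] by (metis empty_iff order_refl)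
  define \<tau> where "\<tau> = lift_arc n c (nat (d - c))"
  have "\<tau> \<in> unit_arcs"
    using cd lift_arc_in_orb_arcs[of c d] adjacent_all_iff
    unfolding \<tau>_def unit_arcs_def diagonal_def is_boundary_seg_def F_def lift_arc_def by auto
  moreover have "crosses n \<tau> \<sigma>"
  proof -
    define e where "e = c div int n * int n"
    have \<tau>_lift: "int (fst \<tau>) = c - e" "int (snd \<tau>) = d - c"
      using cd n_pos unfolding \<tau>_def e_def lift_arc_def diagonal_def by (auto simp: minus_div_mult_eq_mod)
    have "interleaved c d a b" using cd(3) interleaved_commute by blast
    then have "interleaved (int (fst \<tau>)) (int (fst \<tau>) + int (snd \<tau>))
        (int (fst \<sigma>) + - (c div int n) * int n) (int (fst \<sigma>) + - (c div int n) * int n + int (snd \<sigma>))"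
      by (rule interleaved_eqI[where s = "- e"]) (auto simp: \<tau>_lift a_def b_def e_def)
    then show ?thesis unfolding crosses_iff_interleaved by blast
  qed
  ultimately show ?thesis ..
qed

lemma is_triangulation_unit_arcs: "is_triangulation n unit_arcs"
  using crossing_arcs_product_ge_2 crossed_by_unit_arc
  unfolding is_triangulation_def unit_arcs_def by fastforce

lemma unit_triangulation_eq:
  assumes "is_triangulation n T" "\<forall>\<tau>\<in>T. f \<tau> = 1"
  shows "T = unit_arcs"
proof
  show "T \<subseteq> unit_arcs" using assms unfolding is_triangulation_def unit_arcs_def by auto
  show "unit_arcs \<subseteq> T"
  proof
    fix \<tau> assume \<tau>: "\<tau> \<in> unit_arcs"
    show "\<tau> \<in> T"
    proof (rule ccontr)
      assume "\<tau> \<notin> T"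
      then obtain \<sigma> where "\<sigma> \<in> T" "crosses n \<sigma> \<tau>"
        using assms(1) \<tau> unfolding is_triangulation_def unit_arcs_def by blast
      then have "2 \<le> f \<sigma> * f \<tau>"
        using crossing_arcs_product_ge_2 assms(1) \<tau> unfolding is_triangulation_def unit_arcs_def by blast
      then show False using assms(2) \<open>\<sigma> \<in> T\<close> \<tau> unfolding unit_arcs_def by simp
    qed
  qed
qed

theorem unique_unit_triangulation: "\<exists>!T. is_triangulation n T \<and> (\<forall>\<tau>\<in>T. f \<tau> = 1)"
  using is_triangulation_unit_arcs unit_triangulation_eq unfolding unit_arcs_def by blast

end

theorem proposition4p30:
  fixes n :: nat and f :: "nat \<times> nat \<Rightarrow> real"
  assumes "n \<ge> 1"
    and "positive_integral_frieze 3 n f"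
  shows "\<exists>!T. is_triangulation n T \<and> (\<forall>\<tau>\<in>T. f \<tau> = 1)"
proof -
  interpret pos_int_frieze 3 n f using assms by unfold_locales auto
  show ?thesis by (rule unique_unit_triangulation)
qed

end
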